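(* For $M,N\in\Lambda$, if $M=_{\mathsf v}N$ then $\mathrm{BT}(M)=\mathrm{BT}(N)$.
   Context: Call-by-value $\lambda$-calculus with permutations: $\lambda$-terms and values are $M,N::=V\mid MN$, $V::=x\mid\lambda x.M$, up to $\alpha$-conversion. Rules: $(\beta_v)$ $(\lambda x.M)V\to M\{x:=V\}$ if $V$ is a value; $(\sigma_1)$ $(\lambda x.M)NP\to(\lambda x.MP)N$ if $x\notin\mathrm{FV}(P)$; $(\sigma_3)$ $V((\lambda x.M)N)\to(\lambda x.VM)N$ if $V$ is a value and $x\notin\mathrm{FV}(V)$. $\to_{\mathsf v}$ is their contextual closure, $\twoheadrightarrow_{\mathsf v}$ its reflexive-transitive closure, $=_{\mathsf v}$ its reflexive-symmetric-transitive closure. $\Lambda_\bot$ is the set of $\lambda$-terms possibly containing a constant $\bot$; $\sqsubseteq$ is the smallest context-closed preorder on $\Lambda_\bot$ with $\bot\sqsubseteq x$, $\bot\sqsubseteq\lambda x.M$. Approximants $\mathcal A$ ($k\ge0$): $A::=B\mid C$; $B::=x\mid\lambda x.A\mid\bot\mid xBA_1\cdots A_k$; $C::=(\lambda x.A)(yBA_1\cdots A_k)$. $\mathcal A(M)=\{A\in\mathcal A\mid\exists N\in\Lambda,\ M\twoheadrightarrow_{\mathsf v}N,\ A\sqsubseteq N\}$; the Böhm tree is $\mathrm{BT}(M)=\bigsqcup\mathcal A(M)$ (taken to be $\emptyset$ when $\mathcal A(M)=\emptyset$), so that $\mathrm{BT}(M)=\mathrm{BT}(N)$ iff $\mathcal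 A(M)=\mathcal A(N)$. *)

theory Defs
  imports Main
begin

(* Lambda-terms with an optional constant Bot, in de Bruijn notation
   (this quotients by alpha-conversion). *)
datatype trm = Var nat | Lam trm | App trm trm | Bot

fun no_bot :: "trm \<Rightarrow> bool" where
  "no_bot (Var i) = True"
| "no_bot (Lam t) = no_bot t"
| "no_bot (App s t) = (no_bot s \<and> no_bot t)"
| "no_bot Bot = False"

fun is_value :: "trm \<Rightarrow> bool" where
  "is_value (Var i) = True"
| "is_value (Lam t) = True"
| "is_value (App s t) = False"
| "is_value Bot = False"

fun lift :: "nat \<Rightarrow> trm \<Rightarrow> trm" where
  "lift k (Var i) = (if i < k then Var i else Var (Suc i))"
| "lift k (Lam t) = Lam (lift (Suc k) t)"
| "lift k (App s t) = App (lift k s) (lift k t)"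
| "lift k Bot = Bot"

fun subst :: "trm \<Rightarrow> nat \<Rightarrow> trm \<Rightarrow> trm" where
  "subst (Var i) k s = (if i < k then Var i else if i = k then s else Var (i - 1))"
| "subst (Lam t) k s = Lam (subst t (Suc k) (lift 0 s))"
| "subst (App t u) k s = App (subst t k s) (subst u k s)"
| "subst Bot k s = Bot"

(* one-step reduction ->_v: beta_v, sigma_1, sigma_3 and contextual closure.
   The side conditions x \<notin> FV(P), x \<notin> FV(V) are realised by
   the lifting of P resp. V under the new binder. *)
inductive red :: "trm \<Rightarrow> trm \<Rightarrow> bool" where
  beta_v: "is_value V \<Longrightarrow> red (App (Lam M) V) (subst M 0 V)"
| sigma1: "red (App (App (Lam M) N) P) (App (Lam (App M (lift 0 P))) N)"
| sigma3: "is_value V \<Longrightarrow> red (App V (App (Lam M) N)) (App (Lam (App (lift 0 V) M)) N)"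
| ctx_lam: "red M M' \<Longrightarrow> red (Lam M) (Lam M')"
| ctx_appl: "red M M' \<Longrightarrow> red (App M N) (App M' N)"
| ctx_appr: "red N N' \<Longrightarrow> red (App M N) (App M N')"

definition reds :: "trm \<Rightarrow> trm \<Rightarrow> bool" where
  "reds = red\<^sup>*\<^sup>*"

definition conv :: "trm \<Rightarrow> trm \<Rightarrow> bool" where
  "conv = (\<lambda>a b. no_bot a \<and> no_bot b \<and> (red a b \<or> red b a))\<^sup>*\<^sup>*"

inductive below :: "trm \<Rightarrow> trm \<Rightarrow> bool" where
  bot_var: "below Bot (Var x)"
| bot_lam: "below Bot (Lam M)"
| refl: "below M M"
| trans: "below M N \<Longrightarrow> below N P \<Longrightarrow> below M P"
| lam: "below M M' \<Longrightarrow> below (Lam M) (Lam M')"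
| app: "below M M' \<Longrightarrow> below N N' \<Longrightarrow> below (App M N) (App M' N')"

inductive isA and isB and isHB where
  A_B: "isB t \<Longrightarrow> isA t"
| A_C: "isA A \<Longrightarrow> isHB T \<Longrightarrow> isA (App (Lam A) T)"
| B_var: "isB (Var x)"
| B_lam: "isA A \<Longrightarrow> isB (Lam A)"
| B_bot: "isB Bot"
| B_HB: "isHB T \<Longrightarrow> isB T"
| HB_base: "isB B \<Longrightarrow> isHB (App (Var x) B)"
| HB_app: "isHB T \<Longrightarrow> isA A \<Longrightarrow> isHB (App T A)"

definition approx :: "trm \<Rightarrow> trm set" where
  "approx M = {A. isA A \<and> (\<exists>N. no_bot N \<and> reds M N \<and> below A N)}"

end

(* ->_v is confluent by the Hindley-Rosen lemma.  beta_v is confluent by parallel reduction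
   and complete developments (Takahashi).  sigma = sigma_1 + sigma_3 terminates, since a
   multiplicative weight decreases, and is locally confluent, hence confluent by Newman's
   lemma.  A sigma-step and a beta_v-step out of the same term can be joined by at most one
   beta_v-step and some sigma-steps, so the two relations commute.
   An approximant A below N covers no redex of N, except inside subterms that A approximates
   by bot, so A below N survives every reduction of N.  With confluence, a term and each of
   its reducts therefore have the same approximants, and =_v is generated by reduction steps. *)

theory Submission
  imports Defs "HOL-Library.Confluence"
begin

section \<open>Abstract rewriting\<close>

lemma rtranclp_map:
  assumes "\<And>x y. r x y \<Longrightarrow> s (f x) (f y)"
  shows "r\<^sup>*\<^sup>* x y \<Longrightarrow> s\<^sup>*\<^sup>* (f x) (f y)"
  by (induction rule: rtranclp_induct) (auto intro: rtranclp.rtrancl_into_rtrancl assms)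

lemma confluentp_cong_rtranclp: "r\<^sup>*\<^sup>* = s\<^sup>*\<^sup>* \<Longrightarrow> confluentp r = confluentp s"
  by (simp add: confluentp_def rtranclp_conversep)

definition joinable :: "('a \<Rightarrow> 'a \<Rightarrow> bool) \<Rightarrow> 'a \<Rightarrow> 'a \<Rightarrow> bool" where
  "joinable r a b \<longleftrightarrow> (\<exists>c. r\<^sup>*\<^sup>* a c \<and> r\<^sup>*\<^sup>* b c)"

lemma joinableI: "r\<^sup>*\<^sup>* a c \<Longrightarrow> r\<^sup>*\<^sup>* b c \<Longrightarrow> joinable r a b"
  unfolding joinable_def by blast

lemma joinable_sym: "joinable r a b \<Longrightarrow> joinable r b a"
  unfolding joinable_def by blast

lemma newman:
  assumes "wfp r\<inverse>\<inverse>"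
    and local_confluence: "\<And>a b c. r a b \<Longrightarrow> r a c \<Longrightarrow> joinable r b c"
  shows "confluentp r"
proof (rule confluentpI)
  show "\<exists>d. r\<^sup>*\<^sup>* b d \<and> r\<^sup>*\<^sup>* c d" if "r\<^sup>*\<^sup>* a b" "r\<^sup>*\<^sup>* a c" for a b c
    using assms(1) that
  proof (induction a arbitrary: b c rule: wfp_induct_rule)
    case (less a)
    show ?case
    proof (cases "a = b \<or> a = c")
      case True
      then show ?thesis using less by blast
    next
      case False
      then obtain b1 c1 where b1: "r a b1" "r\<^sup>*\<^sup>* b1 b" and c1: "r a c1" "r\<^sup>*\<^sup>* c1 c"
        using less.prems by (metis converse_rtranclpE)
      obtain d where d: "r\<^sup>*\<^sup>* b1 d" "r\<^sup>*\<^sup>* c1 d"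
        using local_confluence[OF b1(1) c1(1)] unfolding joinable_def by blast
      obtain e where e: "r\<^sup>*\<^sup>* b e" "r\<^sup>*\<^sup>* d e"
        using less.IH[OF _ b1(2) d(1)] b1(1) by auto
      obtain f where "r\<^sup>*\<^sup>* c f" "r\<^sup>*\<^sup>* e f"
        using less.IH[OF _ c1(2), of e] c1(1) d(2) e(2) by (auto intro: rtranclp_trans)
      then show ?thesis
        using e(1) by (meson rtranclp_trans)
    qed
  qed
qed

lemma rtranclp_commute_if_strongly_commute:
  assumes strong: "\<And>x y z. s x y \<Longrightarrow> r x z \<Longrightarrow> \<exists>u. r\<^sup>=\<^sup>= y u \<and> s\<^sup>*\<^sup>* z u"
  shows "r\<^sup>*\<^sup>* x y \<Longrightarrow> s\<^sup>*\<^sup>* x z \<Longrightarrow> \<exists>u. s\<^sup>*\<^sup>* y u \<and> r\<^sup>*\<^sup>* z u"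
proof -
  have single: "\<exists>u. s\<^sup>*\<^sup>* y u \<and> r\<^sup>=\<^sup>= z u" if "s\<^sup>*\<^sup>* x z" "r x y" for x y z
    using that
  proof (induction rule: rtranclp_induct)
    case (step z' z)
    then obtain u where u: "s\<^sup>*\<^sup>* y u" "r\<^sup>=\<^sup>= z' u" by blast
    show ?case
    proof (cases "z' = u")
      case True
      then have "s\<^sup>*\<^sup>* y z"
        using u(1) step(2) by auto
      then show ?thesis by blast
    next
      case False
      then obtain u' where "r\<^sup>=\<^sup>= z u'" "s\<^sup>*\<^sup>* u u'"
        using strong[OF step(2)] u(2) by blast
      then show ?thesis using u(1) by (meson rtranclp_trans)
    qed
  qed blast
  show "r\<^sup>*\<^sup>* x y \<Longrightarrow> s\<^sup>*\<^sup>* x z \<Longrightarrow> \<exists>u. s\<^sup>*\<^sup>* y u \<and> r\<^sup>*\<^sup>* z u"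
  proof (induction rule: rtranclp_induct)
    case (step y' y)
    then obtain u where "s\<^sup>*\<^sup>* y' u" "r\<^sup>*\<^sup>* z u" by blast
    moreover obtain u' where "s\<^sup>*\<^sup>* y u'" "r\<^sup>=\<^sup>= u u'"
      using single[OF \<open>s\<^sup>*\<^sup>* y' u\<close> step(2)] by blast
    moreover from \<open>r\<^sup>=\<^sup>= u u'\<close> have "r\<^sup>*\<^sup>* u u'"
      by auto
    ultimately show ?case
      by (meson rtranclp_trans)
  qed blast
qed

lemma confluentp_sup:
  assumes "confluentp r" and "confluentp s"
    and commute: "\<And>x y z. r\<^sup>*\<^sup>* x y \<Longrightarrow> s\<^sup>*\<^sup>* x z \<Longrightarrow> \<exists>u. s\<^sup>*\<^sup>* y u \<and> r\<^sup>*\<^sup>* z u"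
  shows "confluentp (sup r s)"
proof -
  have "strong_confluentp (sup r\<^sup>*\<^sup>* s\<^sup>*\<^sup>*)"
  proof (rule strong_confluentpI)
    fix x y z
    assume "sup r\<^sup>*\<^sup>* s\<^sup>*\<^sup>* x y" "sup r\<^sup>*\<^sup>* s\<^sup>*\<^sup>* x z"
    then have "\<exists>u. (r\<^sup>*\<^sup>* y u \<or> s\<^sup>*\<^sup>* y u) \<and> (r\<^sup>*\<^sup>* z u \<or> s\<^sup>*\<^sup>* z u)"
    proof (elim sup2E)
      assume "r\<^sup>*\<^sup>* x y" "r\<^sup>*\<^sup>* x z"
      then show ?thesis using confluentpD[OF assms(1)] by blast
    next
      assume "r\<^sup>*\<^sup>* x y" "s\<^sup>*\<^sup>* x z"
      then show ?thesis using commute by blast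
    next
      assume "s\<^sup>*\<^sup>* x y" "r\<^sup>*\<^sup>* x z"
      then show ?thesis using commute by blast
    next
      assume "s\<^sup>*\<^sup>* x y" "s\<^sup>*\<^sup>* x z"
      then show ?thesis using confluentpD[OF assms(2)] by blast
    qed
    then show "\<exists>u. (sup r\<^sup>*\<^sup>* s\<^sup>*\<^sup>*)\<^sup>*\<^sup>* y u \<and> (sup r\<^sup>*\<^sup>* s\<^sup>*\<^sup>*)\<^sup>=\<^sup>= z u"
      by blast
  qed
  then show ?thesis
    using confluentp_cong_rtranclp[OF rtranclp_sup_rtranclp] strong_confluentp_imp_confluentp by blast
qed

section \<open>Lifting and substitution\<close>

lemma lift_lift: "i \<le> k \<Longrightarrow> lift (Suc k) (lift i t) = lift i (lift k t)"
  by (induction t arbitrary: i k) auto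

lemma lift_subst_ge: "j \<le> i \<Longrightarrow> lift i (subst t j s) = subst (lift (Suc i) t) j (lift i s)"
  by (induction t arbitrary: i j s) (auto simp: lift_lift)

lemma lift_subst_le: "i \<le> j \<Longrightarrow> lift i (subst t j s) = subst (lift i t) (Suc j) (lift i s)"
  by (induction t arbitrary: i j s) (auto simp: lift_lift)

lemma subst_lift [simp]: "subst (lift k t) k s = t"
  by (induction t arbitrary: k s) auto

lemma subst_subst:
  "i \<le> j \<Longrightarrow> subst (subst t (Suc j) (lift i v)) i (subst u j v) = subst (subst t i u) j v"
proof (induction t arbitrary: i j u v)
  case (Lam t)
  have "lift 0 (lift i v) = lift (Suc i) (lift 0 v)"
    by (simp add: lift_lift)
  moreover have "subst (lift 0 u) (Suc j) (lift 0 v) = lift 0 (subst u j v)"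
    by (simp add: lift_subst_le)
  moreover have "subst (subst t (Suc (Suc j)) (lift (Suc i) (lift 0 v))) (Suc i)
      (subst (lift 0 u) (Suc j) (lift 0 v)) = subst (subst t (Suc i) (lift 0 u)) (Suc j) (lift 0 v)"
    using Lam.IH[of "Suc i" "Suc j"] Lam.prems by simp
  ultimately show ?case by simp
qed auto

lemma is_value_lift [simp]: "is_value (lift k V) = is_value V"
  by (cases V) auto

lemma is_value_subst: "is_value V \<Longrightarrow> is_value N \<Longrightarrow> is_value (subst V k N)"
  by (cases V) auto

section \<open>Confluence of \<open>\<beta>\<^sub>v\<close>\<close>

inductive beta :: "trm \<Rightarrow> trm \<Rightarrow> bool" where
  beta_v: "is_value V \<Longrightarrow> beta (App (Lam M) V) (subst M 0 V)"
| beta_lam: "beta M M' \<Longrightarrow> beta (Lam M) (Lam M')"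
| beta_appl: "beta M M' \<Longrightarrow> beta (App M N) (App M' N)"
| beta_appr: "beta N N' \<Longrightarrow> beta (App M N) (App M N')"

inductive_cases beta_LamE: "beta (Lam M) X"

lemma beta_is_value: "beta V V' \<Longrightarrow> is_value V \<Longrightarrow> is_value V'"
  by (induction rule: beta.induct) auto

lemma beta_lift: "beta M N \<Longrightarrow> beta (lift k M) (lift k N)"
proof (induction arbitrary: k rule: beta.induct)
  case (beta_v V M)
  then show ?case
    using beta.beta_v[of "lift k V" "lift (Suc k) M"] by (simp add: lift_subst_ge)
qed (auto intro: beta.intros)

lemma betas_lam: "beta\<^sup>*\<^sup>* M M' \<Longrightarrow> beta\<^sup>*\<^sup>* (Lam M) (Lam M')"
  using rtranclp_map[of beta beta Lam] beta_lam by blast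

lemma betas_app: "beta\<^sup>*\<^sup>* M M' \<Longrightarrow> beta\<^sup>*\<^sup>* N N' \<Longrightarrow> beta\<^sup>*\<^sup>* (App M N) (App M' N')"
  using rtranclp_map[of beta beta "\<lambda>M. App M N"] rtranclp_map[of beta beta "App M'"]
  by (meson beta_appl beta_appr rtranclp_trans)

inductive pbeta :: "trm \<Rightarrow> trm \<Rightarrow> bool" where
  pbeta_var: "pbeta (Var i) (Var i)"
| pbeta_bot: "pbeta Bot Bot"
| pbeta_lam: "pbeta M M' \<Longrightarrow> pbeta (Lam M) (Lam M')"
| pbeta_app: "pbeta M M' \<Longrightarrow> pbeta N N' \<Longrightarrow> pbeta (App M N) (App M' N')"
| pbeta_beta: "pbeta M M' \<Longrightarrow> pbeta V V' \<Longrightarrow> is_value V \<Longrightarrow> pbeta (App (Lam M) V) (subst M' 0 V')"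

inductive_cases pbeta_LamE: "pbeta (Lam M) X"

lemma pbeta_refl [simp]: "pbeta M M"
  by (induction M) (auto intro: pbeta.intros)

lemma pbeta_is_value: "pbeta V V' \<Longrightarrow> is_value V \<Longrightarrow> is_value V'"
  by (induction rule: pbeta.induct) auto

lemma pbeta_lift: "pbeta M M' \<Longrightarrow> pbeta (lift k M) (lift k M')"
proof (induction arbitrary: k rule: pbeta.induct)
  case (pbeta_beta M M' V V')
  then show ?case
    using pbeta.pbeta_beta[of "lift (Suc k) M" "lift (Suc k) M'" "lift k V" "lift k V'"]
    by (simp add: lift_subst_ge)
qed (auto intro: pbeta.intros)

lemma pbeta_subst:
  "pbeta M M' \<Longrightarrow> pbeta N N' \<Longrightarrow> is_value N \<Longrightarrow> pbeta (subst M k N) (subst M' k N')"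
proof (induction arbitrary: k N N' rule: pbeta.induct)
  case (pbeta_beta M M' V V')
  then have "pbeta (subst (App (Lam M) V) k N)
      (subst (subst M' (Suc k) (lift 0 N')) 0 (subst V' k N'))"
    by (simp add: pbeta.pbeta_beta pbeta_lift is_value_subst)
  then show ?case
    using subst_subst[of 0 k M' N' V'] by simp
next
  case (pbeta_lam M M')
  then show ?case by (simp add: pbeta.pbeta_lam pbeta_lift)
qed (auto intro: pbeta.intros)

fun develop :: "trm \<Rightarrow> trm" where
  "develop (Var i) = Var i"
| "develop Bot = Bot"
| "develop (Lam M) = Lam (develop M)"
| "develop (App (Lam M) N) =
    (if is_value N then subst (develop M) 0 (develop N) else App (Lam (develop M)) (develop N))"
| "develop (App M N) = App (develop M) (develop N)"

lemma pbeta_develop: "pbeta M N \<Longrightarrow> pbeta N (develop M)"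
proof (induction rule: pbeta.induct)
  case (pbeta_app M M' N N')
  show ?case
  proof (cases "\<exists>A. M = Lam A")
    case True
    then obtain A where A: "M = Lam A" by blast
    with pbeta_app obtain A' where A': "M' = Lam A'" "pbeta A' (develop A)"
      by (auto elim: pbeta_LamE)
    show ?thesis
      using A A' pbeta_app pbeta_is_value by (cases "is_value N") (auto intro: pbeta.intros)
  next
    case False
    then have "develop (App M N) = App (develop M) (develop N)"
      by (cases M) auto
    then show ?thesis
      using pbeta_app by (auto intro: pbeta.intros)
  qed
next
  case (pbeta_beta M M' V V')
  then show ?case
    using pbeta_is_value by (auto intro: pbeta_subst)
qed (auto intro: pbeta.intros)

lemma rtranclp_beta_eq_pbeta: "beta\<^sup>*\<^sup>* = pbeta\<^sup>*\<^sup>*"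
proof (rule antisym)
  have "beta M N \<Longrightarrow> pbeta M N" for M N
    by (induction rule: beta.induct) (auto intro: pbeta.intros)
  then show "beta\<^sup>*\<^sup>* \<le> pbeta\<^sup>*\<^sup>*"
    by (intro rtranclp_mono) blast
next
  have "pbeta M N \<Longrightarrow> beta\<^sup>*\<^sup>* M N" for M N
  proof (induction rule: pbeta.induct)
    case (pbeta_beta M M' V V')
    then have "beta\<^sup>*\<^sup>* (App (Lam M) V) (App (Lam M') V')"
      by (simp add: betas_app betas_lam)
    moreover have "beta (App (Lam M') V') (subst M' 0 V')"
      using pbeta_beta pbeta_is_value by (auto intro: beta.intros)
    ultimately show ?case by simp
  qed (auto intro: betas_lam betas_app)
  then show "pbeta\<^sup>*\<^sup>* \<le> beta\<^sup>*\<^sup>*"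
    by (metis predicate2I rtranclp_idemp rtranclp_mono)
qed

lemma confluentp_beta: "confluentp beta"
proof -
  have "strong_confluentp pbeta"
    by (rule strong_confluentpI) (use pbeta_develop in blast)
  then show ?thesis
    by (simp add: confluentp_cong_rtranclp[OF rtranclp_beta_eq_pbeta] strong_confluentp_imp_confluentp)
qed

section \<open>Confluence of \<open>\<sigma>\<close>\<close>

inductive sigma :: "trm \<Rightarrow> trm \<Rightarrow> bool" where
  sigma1: "sigma (App (App (Lam M) N) P) (App (Lam (App M (lift 0 P))) N)"
| sigma3: "is_value V \<Longrightarrow> sigma (App V (App (Lam M) N)) (App (Lam (App (lift 0 V) M)) N)"
| sigma_lam: "sigma M M' \<Longrightarrow> sigma (Lam M) (Lam M')"
| sigma_appl: "sigma M M' \<Longrightarrow> sigma (App M N) (App M' N)"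
| sigma_appr: "sigma N N' \<Longrightarrow> sigma (App M N) (App M N')"

inductive_cases sigma_LamE: "sigma (Lam M) X"

lemma sigma_is_value: "sigma V V' \<Longrightarrow> is_value V \<Longrightarrow> is_value V'"
  by (induction rule: sigma.induct) auto

lemma sigma_lift: "sigma M N \<Longrightarrow> sigma (lift k M) (lift k N)"
proof (induction arbitrary: k rule: sigma.induct)
  case (sigma1 M N P)
  then show ?case
    using sigma.sigma1[of "lift (Suc k) M" "lift k N" "lift k P"] by (simp add: lift_lift)
next
  case (sigma3 V M N)
  then show ?case
    using sigma.sigma3[of "lift k V" "lift (Suc k) M" "lift k N"] by (simp add: lift_lift)
qed (auto intro: sigma.intros)

lemma sigma_subst: "sigma M M' \<Longrightarrow> is_value N \<Longrightarrow> sigma (subst M k N) (subst M' k N)"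
proof (induction arbitrary: k N rule: sigma.induct)
  case (sigma1 M P Q)
  then show ?case
    using sigma.sigma1[of "subst M (Suc k) (lift 0 N)" "subst P k N" "subst Q k N"]
    by (simp add: lift_subst_le)
next
  case (sigma3 V M P)
  then show ?case
    using sigma.sigma3[of "subst V k N" "subst M (Suc k) (lift 0 N)" "subst P k N"]
    by (simp add: lift_subst_le is_value_subst)
qed (auto intro: sigma.intros)

lemma sigmas_lam: "sigma\<^sup>*\<^sup>* M M' \<Longrightarrow> sigma\<^sup>*\<^sup>* (Lam M) (Lam M')"
  using rtranclp_map[of sigma sigma Lam] sigma_lam by blast

lemma sigmas_app: "sigma\<^sup>*\<^sup>* M M' \<Longrightarrow> sigma\<^sup>*\<^sup>* N N' \<Longrightarrow> sigma\<^sup>*\<^sup>* (App M N) (App M' N')"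
  using rtranclp_map[of sigma sigma "\<lambda>M. App M N"] rtranclp_map[of sigma sigma "App M'"]
  by (meson sigma_appl sigma_appr rtranclp_trans)

lemma sigmas_subst_value: "sigma V V' \<Longrightarrow> is_value V \<Longrightarrow> sigma\<^sup>*\<^sup>* (subst M k V) (subst M k V')"
  by (induction M arbitrary: k V V') (auto simp: sigmas_lam sigmas_app sigma_lift)

text \<open>Arguments are weighted quadratically, so moving a redex \<open>(\<lambda>x.M)N\<close> out of an
  argument position, as \<open>\<sigma>\<^sub>1\<close> and \<open>\<sigma>\<^sub>3\<close> do, decreases the weight.\<close>

fun sigma_weight :: "trm \<Rightarrow> nat" where
  "sigma_weight (Var i) = 2"
| "sigma_weight Bot = 2"
| "sigma_weight (Lam M) = Suc (sigma_weight M)"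
| "sigma_weight (App M N) = sigma_weight M * (sigma_weight N)\<^sup>2"

lemma sigma_weight_ge_2: "2 \<le> sigma_weight M"
proof (induction M)
  case (App M N)
  then have "2 * 1 \<le> sigma_weight M * (sigma_weight N)\<^sup>2"
    by (intro mult_le_mono) (auto simp: power2_eq_square)
  then show ?case by simp
qed auto

lemma sigma_weight_sq_ge_4: "4 \<le> (sigma_weight M)\<^sup>2"
  using mult_le_mono[OF sigma_weight_ge_2 sigma_weight_ge_2, of M M] by (simp add: power2_eq_square)

lemma sigma_weight_lift [simp]: "sigma_weight (lift k M) = sigma_weight M"
  by (induction M arbitrary: k) auto

lemma sigma_weight_less: "sigma M N \<Longrightarrow> sigma_weight N < sigma_weight M"
proof (induction rule: sigma.induct)
  case (sigma1 M N P)
  let ?m = "sigma_weight M" and ?n = "(sigma_weight N)\<^sup>2" and ?p = "(sigma_weight P)\<^sup>2"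
  have "4 \<le> ?p" "4 \<le> ?n"
    by (rule sigma_weight_sq_ge_4)+
  then have "(?m * ?p + 1) * ?n < (?m + 1) * ?n * ?p"
    using sigma_weight_ge_2[of N] by (simp add: algebra_simps)
  then show ?case by simp
next
  case (sigma3 V M N)
  let ?m = "sigma_weight M" and ?n = "(sigma_weight N)\<^sup>2" and ?v = "sigma_weight V"
  have v: "2 \<le> ?v" and n: "4 \<le> ?n"
    by (rule sigma_weight_ge_2 sigma_weight_sq_ge_4)+
  have "?v * ?m\<^sup>2 + 1 < ?v * (?m + 1)\<^sup>2"
    using v by (simp add: power2_eq_square algebra_simps)
  also have "\<dots> \<le> ?v * (?m + 1)\<^sup>2 * ?n"
    using n by simp
  finally have "(?v * ?m\<^sup>2 + 1) * ?n < (?v * (?m + 1)\<^sup>2 * ?n) * ?n"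
    using sigma_weight_ge_2[of N] by (intro mult_less_mono1) auto
  then show ?case
    by (simp add: power_mult_distrib power2_eq_square algebra_simps)
next
  case (sigma_appl M M' N)
  then show ?case
    using sigma_weight_ge_2[of N] by simp
next
  case (sigma_appr N N' M)
  then show ?case
    using sigma_weight_ge_2[of M] by (simp add: power_strict_mono)
qed auto

lemma sigma1_joinable:
  assumes "sigma (App (App (Lam A) B) C) X"
  shows "joinable sigma (App (Lam (App A (lift 0 C))) B) X"
  using assms
proof cases
  case sigma1
  then show ?thesis by (auto intro: joinableI)
next
  case (sigma_appl Y)
  then have Y: "sigma (App (Lam A) B) Y" and X: "X = App Y C" by auto
  from Y show ?thesis
  proof cases
    case (sigma3 M D)
    let ?Q = "App (Lam (App (Lam (App (lift 1 A) (lift 0 (lift 0 C)))) M)) D"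
    have "sigma (App (Lam (App A (lift 0 C))) B) ?Q"
      using sigma.sigma3[of "Lam (App A (lift 0 C))" M D] sigma3 by (simp add: lift_lift)
    moreover have "sigma X (App (Lam (App (App (Lam (lift 1 A)) M) (lift 0 C))) D)"
      using X sigma3 sigma.sigma1 by simp
    moreover have "sigma (App (Lam (App (App (Lam (lift 1 A)) M) (lift 0 C))) D) ?Q"
      by (intro sigma.intros)
    ultimately show ?thesis
      by (meson joinableI r_into_rtranclp converse_rtranclp_into_rtranclp)
  next
    case (sigma_appl L)
    then obtain A' where "L = Lam A'" "sigma A A'"
      by (auto elim: sigma_LamE)
    then show ?thesis
      using sigma_appl X
      by (intro joinableI[of _ _ "App (Lam (App A' (lift 0 C))) B"]) (auto intro: sigma.intros)
  next
    case (sigma_appr B')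
    then show ?thesis
      using X by (intro joinableI[of _ _ "App (Lam (App A (lift 0 C))) B'"]) (auto intro: sigma.intros)
  qed
next
  case (sigma_appr C')
  then show ?thesis
    by (intro joinableI[of _ _ "App (Lam (App A (lift 0 C'))) B"])
      (auto intro!: r_into_rtranclp sigma.intros sigma_lift)
qed auto

lemma sigma3_joinable:
  assumes "is_value V" and "sigma (App V (App (Lam A) B)) X"
  shows "joinable sigma (App (Lam (App (lift 0 V) A)) B) X"
  using assms(2)
proof cases
  case sigma1
  then show ?thesis using assms(1) by auto
next
  case sigma3
  then show ?thesis by (auto intro: joinableI)
next
  case (sigma_appl V')
  then have "is_value V'"
    using sigma_is_value assms(1) by auto
  then show ?thesis
    using sigma_appl by (intro joinableI[of _ _ "App (Lam (App (lift 0 V') A)) B"])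
      (auto intro!: r_into_rtranclp sigma.intros sigma_lift)
next
  case (sigma_appr Y)
  then have Y: "sigma (App (Lam A) B) Y" and X: "X = App V Y" by auto
  from Y show ?thesis
  proof cases
    case (sigma3 M D)
    let ?Q = "App (Lam (App (Lam (App (lift 0 (lift 0 V)) (lift 1 A))) M)) D"
    have "sigma (App (Lam (App (lift 0 V) A)) B) ?Q"
      using sigma.sigma3[of "Lam (App (lift 0 V) A)" M D] sigma3 by (simp add: lift_lift)
    moreover have "sigma X (App (Lam (App (lift 0 V) (App (Lam (lift 1 A)) M))) D)"
      using X sigma3 sigma.sigma3 assms(1) by simp
    moreover have "sigma (App (Lam (App (lift 0 V) (App (Lam (lift 1 A)) M))) D) ?Q"
      using assms(1) by (intro sigma.intros) simp
    ultimately show ?thesis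
      by (meson joinableI r_into_rtranclp converse_rtranclp_into_rtranclp)
  next
    case (sigma_appl L)
    then obtain A' where "L = Lam A'" "sigma A A'"
      by (auto elim: sigma_LamE)
    then show ?thesis
      using sigma_appl X assms(1)
      by (intro joinableI[of _ _ "App (Lam (App (lift 0 V) A')) B"]) (auto intro: sigma.intros)
  next
    case (sigma_appr B')
    then show ?thesis
      using X assms(1)
      by (intro joinableI[of _ _ "App (Lam (App (lift 0 V) A)) B'"]) (auto intro: sigma.intros)
  qed
qed

lemma sigma_local_confluence: "sigma M N1 \<Longrightarrow> sigma M N2 \<Longrightarrow> joinable sigma N1 N2"
proof (induction arbitrary: N2 rule: sigma.induct)
  case (sigma1 M N P)
  then show ?case by (rule sigma1_joinable)
next
  case (sigma3 V M N)
  then show ?case by (rule sigma3_joinable)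
next
  case (sigma_lam M M')
  then obtain M'' where "N2 = Lam M''" "sigma M M''"
    by (auto elim: sigma_LamE)
  with sigma_lam.IH show ?case
    unfolding joinable_def by (meson sigmas_lam)
next
  case (sigma_appl M M' N)
  from sigma_appl.prems show ?case
  proof cases
    case (sigma_appl M'')
    then show ?thesis
      using sigma_appl.IH unfolding joinable_def by (meson sigmas_app rtranclp.rtrancl_refl)
  next
    case (sigma_appr N')
    then show ?thesis
      using sigma_appl.hyps by (intro joinableI[of _ _ "App M' N'"]) (auto intro: sigma.intros)
  qed (metis sigma_appl sigma.sigma_appl sigma1_joinable sigma3_joinable joinable_sym)+
next
  case (sigma_appr N N' M)
  from sigma_appr.prems show ?case
  proof cases
    case (sigma_appr N'')
    then show ?thesis
      using sigma_appr.IH unfolding joinable_def by (meson sigmas_app rtranclp.rtrancl_refl)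
  next
    case (sigma_appl M')
    then show ?thesis
      using sigma_appr.hyps by (intro joinableI[of _ _ "App M' N'"]) (auto intro: sigma.intros)
  qed (metis sigma_appr sigma.sigma_appr sigma1_joinable sigma3_joinable joinable_sym)+
qed

lemma confluentp_sigma: "confluentp sigma"
proof (rule newman)
  show "wfp sigma\<inverse>\<inverse>"
    by (rule wfp_if_convertible_to_nat[where f = sigma_weight]) (simp add: sigma_weight_less)
qed (rule sigma_local_confluence)

section \<open>Confluence of \<open>\<rightarrow>\<^sub>v\<close>\<close>

lemma red_eq_sup_beta_sigma: "red = sup beta sigma"
proof (intro ext iffI)
  show "red M N \<Longrightarrow> sup beta sigma M N" for M N
    by (induction rule: red.induct) (auto intro: beta.intros sigma.intros)
  have "beta M N \<Longrightarrow> red M N" for M N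
    by (induction rule: beta.induct) (auto intro: red.intros)
  moreover have "sigma M N \<Longrightarrow> red M N" for M N
    by (induction rule: sigma.induct) (auto intro: red.intros)
  ultimately show "sup beta sigma M N \<Longrightarrow> red M N" for M N
    by blast
qed

lemma sigma1_beta_commute:
  assumes "beta (App (App (Lam A) B) C) P"
  shows "\<exists>Q. beta\<^sup>=\<^sup>= (App (Lam (App A (lift 0 C))) B) Q \<and> sigma\<^sup>*\<^sup>* P Q"
  using assms
proof cases
  case (beta_appl Y)
  from \<open>beta (App (Lam A) B) Y\<close> show ?thesis
  proof cases
    case beta_v
    then show ?thesis
      using beta_appl beta.beta_v[of B "App A (lift 0 C)"] by auto
  next
    case (beta_appl L)
    then obtain A' where "L = Lam A'" "beta A A'"
      by (auto elim: beta_LamE)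
    then show ?thesis
      using beta_appl \<open>P = App Y C\<close>
      by (intro exI[of _ "App (Lam (App A' (lift 0 C))) B"]) (auto intro: beta.intros sigma.intros)
  next
    case (beta_appr B')
    then show ?thesis
      using \<open>P = App Y C\<close>
      by (intro exI[of _ "App (Lam (App A (lift 0 C))) B'"]) (auto intro: beta.intros sigma.intros)
  qed
next
  case (beta_appr C')
  then show ?thesis
    by (intro exI[of _ "App (Lam (App A (lift 0 C'))) B"])
      (auto intro: beta.intros sigma.intros beta_lift)
qed

lemma sigma3_beta_commute:
  assumes "is_value V" and "beta (App V (App (Lam A) B)) P"
  shows "\<exists>Q. beta\<^sup>=\<^sup>= (App (Lam (App (lift 0 V) A)) B) Q \<and> sigma\<^sup>*\<^sup>* P Q"
  using assms(2)
proof cases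
  case (beta_appl V')
  then have "is_value V'"
    using beta_is_value assms(1) by auto
  then show ?thesis
    using beta_appl
    by (intro exI[of _ "App (Lam (App (lift 0 V') A)) B"])
      (auto intro: beta.intros sigma.intros beta_lift)
next
  case (beta_appr Y)
  from \<open>beta (App (Lam A) B) Y\<close> show ?thesis
  proof cases
    case beta_v
    then show ?thesis
      using beta_appr beta.beta_v[of B "App (lift 0 V) A"] by auto
  next
    case (beta_appl L)
    then obtain A' where "L = Lam A'" "beta A A'"
      by (auto elim: beta_LamE)
    then show ?thesis
      using beta_appl \<open>P = App V Y\<close> assms(1)
      by (intro exI[of _ "App (Lam (App (lift 0 V) A')) B"]) (auto intro: beta.intros sigma.intros)
  next
    case (beta_appr B')
    then show ?thesis
      using \<open>P = App V Y\<close> assms(1)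
      by (intro exI[of _ "App (Lam (App (lift 0 V) A)) B'"]) (auto intro: beta.intros sigma.intros)
  qed
qed simp

lemma sigma_beta_strongly_commute:
  "sigma M N \<Longrightarrow> beta M P \<Longrightarrow> \<exists>Q. beta\<^sup>=\<^sup>= N Q \<and> sigma\<^sup>*\<^sup>* P Q"
proof (induction arbitrary: P rule: sigma.induct)
  case (sigma1 A B C)
  then show ?case by (rule sigma1_beta_commute)
next
  case (sigma3 V A B)
  then show ?case by (rule sigma3_beta_commute)
next
  case (sigma_lam M M')
  then obtain P' where "P = Lam P'" "beta M P'"
    by (auto elim: beta_LamE)
  with sigma_lam.IH obtain Q where "beta\<^sup>=\<^sup>= M' Q" "sigma\<^sup>*\<^sup>* P' Q"
    by blast
  then show ?case
    using \<open>P = Lam P'\<close> by (intro exI[of _ "Lam Q"]) (auto intro: beta.intros sigmas_lam)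
next
  case (sigma_appl M M' N)
  from sigma_appl.prems show ?case
  proof cases
    case (beta_v A)
    then obtain A' where "M' = Lam A'" "sigma A A'"
      using sigma_appl by (auto elim: sigma_LamE)
    then show ?thesis
      using beta_v by (intro exI[of _ "subst A' 0 N"]) (auto intro: beta.intros sigma_subst)
  next
    case (beta_appl M'')
    with sigma_appl.IH obtain Q where "beta\<^sup>=\<^sup>= M' Q" "sigma\<^sup>*\<^sup>* M'' Q"
      by blast
    then show ?thesis
      using beta_appl by (intro exI[of _ "App Q N"]) (auto intro: beta.intros sigmas_app)
  next
    case (beta_appr N')
    then show ?thesis
      using sigma_appl by (intro exI[of _ "App M' N'"]) (auto intro: beta.intros sigma.intros)
  qed
next
  case (sigma_appr N N' M)
  from sigma_appr.prems show ?case
  proof cases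
    case (beta_v A)
    then have "is_value N'"
      using sigma_is_value sigma_appr by auto
    then show ?thesis
      using beta_v sigma_appr
      by (intro exI[of _ "subst A 0 N'"]) (auto intro: beta.intros sigmas_subst_value)
  next
    case (beta_appr N'')
    with sigma_appr.IH obtain Q where "beta\<^sup>=\<^sup>= N' Q" "sigma\<^sup>*\<^sup>* N'' Q"
      by blast
    then show ?thesis
      using beta_appr by (intro exI[of _ "App M Q"]) (auto intro: beta.intros sigmas_app)
  next
    case (beta_appl M')
    then show ?thesis
      using sigma_appr by (intro exI[of _ "App M' N'"]) (auto intro: beta.intros sigma.intros)
  qed
qed

lemma confluentp_red: "confluentp red"
  unfolding red_eq_sup_beta_sigma
  using confluentp_beta confluentp_sigma
    rtranclp_commute_if_strongly_commute[OF sigma_beta_strongly_commute]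
  by (rule confluentp_sup)

section \<open>Approximants are stable under reduction\<close>

fun below_rec :: "trm \<Rightarrow> trm \<Rightarrow> bool" where
  "below_rec Bot t \<longleftrightarrow> t = Bot \<or> is_value t"
| "below_rec (Var i) t \<longleftrightarrow> t = Var i"
| "below_rec (Lam a) t \<longleftrightarrow> (\<exists>b. t = Lam b \<and> below_rec a b)"
| "below_rec (App a c) t \<longleftrightarrow> (\<exists>b d. t = App b d \<and> below_rec a b \<and> below_rec c d)"

lemma below_rec_Lam [simp]: "below_rec a (Lam M) \<longleftrightarrow> a = Bot \<or> (\<exists>a'. a = Lam a' \<and> below_rec a' M)"
  by (cases a) auto

lemma below_rec_App [simp]:
  "below_rec a (App M N) \<longleftrightarrow> (\<exists>a1 a2. a = App a1 a2 \<and> below_rec a1 M \<and> below_rec a2 N)"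
  by (cases a) auto

lemma below_rec_Var [simp]: "below_rec a (Var i) \<longleftrightarrow> a = Bot \<or> a = Var i"
  by (cases a) auto

lemma below_rec_Bot [simp]: "below_rec a Bot \<longleftrightarrow> a = Bot"
  by (cases a) auto

declare below_rec.simps(2-4) [simp del]

lemma below_rec_refl: "below_rec t t"
  by (induction t) auto

lemma below_rec_trans: "below_rec a b \<Longrightarrow> below_rec b c \<Longrightarrow> below_rec a c"
  by (induction c arbitrary: a b) fastforce+

lemma below_iff_below_rec: "below A N \<longleftrightarrow> below_rec A N"
proof
  show "below A N \<Longrightarrow> below_rec A N"
    by (induction rule: below.induct) (auto intro: below_rec_refl below_rec_trans)
  show "below_rec A N \<Longrightarrow> below A N"
    by (induction N arbitrary: A) (auto intro: below.intros)
qed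

fun head_var :: "trm \<Rightarrow> bool" where
  "head_var (Var i) = True"
| "head_var (App s t) = head_var s"
| "head_var _ = False"

text \<open>If \<open>A\<close> is rigid and \<open>A \<sqsubseteq> N\<close>, every redex of \<open>N\<close> lies inside a subterm
  that \<open>A\<close> approximates by \<open>\<bottom>\<close>; hence \<open>A \<sqsubseteq> N\<close> survives reduction of \<open>N\<close>.\<close>

fun rigid :: "trm \<Rightarrow> bool" where
  "rigid (Var i) = True"
| "rigid Bot = True"
| "rigid (Lam a) = rigid a"
| "rigid (App s t) \<longleftrightarrow> rigid s \<and> rigid t \<and> s \<noteq> Bot \<and> (\<forall>a b. s \<noteq> App (Lam a) b)
     \<and> ((\<exists>a. s = Lam a) \<longrightarrow> (\<exists>a b. t = App a b))
     \<and> (is_value s \<longrightarrow> (\<forall>a b. t \<noteq> App (Lam a) b))"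

lemma rigid_approximant:
  shows "isA t \<Longrightarrow> rigid t"
    and "isB t \<Longrightarrow> rigid t \<and> (\<forall>a b. t \<noteq> App (Lam a) b)"
    and "isHB t \<Longrightarrow> rigid t \<and> (\<exists>a b. t = App a b) \<and> head_var t"
proof (induction rule: isA_isB_isHB.inducts)
  case (A_C A T)
  then show ?case by (cases T) auto
next
  case (HB_app T A)
  then show ?case by (cases T) (auto elim: head_var.elims)
qed auto

lemma below_rec_red: "red N K \<Longrightarrow> below_rec A N \<Longrightarrow> rigid A \<Longrightarrow> below_rec A K"
proof (induction arbitrary: A rule: red.induct)
  case (beta_v V M)
  then show ?case by (cases V) auto
next
  case (sigma3 V M N)
  then show ?case by (cases V) auto
qed auto

lemma approximant_below_reds:
  assumes "isA A" "below A N" "reds N K"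
  shows "below A K"
  using assms(3,2) unfolding reds_def below_iff_below_rec
  by (induction rule: rtranclp_induct) (auto intro: below_rec_red rigid_approximant(1)[OF assms(1)])

lemma no_bot_lift [simp]: "no_bot (lift k t) = no_bot t"
  by (induction t arbitrary: k) auto

lemma no_bot_subst: "no_bot t \<Longrightarrow> no_bot s \<Longrightarrow> no_bot (subst t k s)"
  by (induction t arbitrary: k s) auto

lemma no_bot_red: "red M N \<Longrightarrow> no_bot M \<Longrightarrow> no_bot N"
  by (induction rule: red.induct) (auto intro: no_bot_subst)

lemma no_bot_reds: "reds M N \<Longrightarrow> no_bot M \<Longrightarrow> no_bot N"
  unfolding reds_def by (induction rule: rtranclp_induct) (auto intro: no_bot_red)

lemma approx_reds_eq:
  assumes "reds M L"
  shows "approx M = approx L"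
proof
  show "approx L \<subseteq> approx M"
    using assms unfolding approx_def reds_def by (auto intro: rtranclp_trans)
  show "approx M \<subseteq> approx L"
  proof
    fix A
    assume "A \<in> approx M"
    then obtain N where A: "isA A" "no_bot N" "reds M N" "below A N"
      unfolding approx_def by blast
    obtain K where K: "reds N K" "reds L K"
      using confluentpD[OF confluentp_red] A(3) assms unfolding reds_def by blast
    then show "A \<in> approx L"
      using A K no_bot_reds approximant_below_reds unfolding approx_def by blast
  qed
qed

theorem proposition2p11:
  assumes "no_bot M" and "no_bot N" and "conv M N"
  shows "approx M = approx N"
  using assms(3) unfolding conv_def
proof (induction rule: rtranclp_induct)
  case (step L L')
  then show ?case
    using approx_reds_eq unfolding reds_def by (metis r_into_rtranclp)
qed simp

end
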